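(* Let $A>0$, $\beta\in(0,1)$, $\pi_0,\pi_1\in[0,1]$, and integers $n_{te}\ge1$, $n_0,n_1\ge1$, $0\le k_0\le n_0$, $0\le k_1\le n_1$. Let $y_{10},\dots,y_{n_{te}0},y_{11},\dots,y_{n_{te}1}$ be $2n_{te}$ independent $[0,1]$-valued random variables with, for all $x\in(0,1)$, $$P(y_{i0}\le x)=\sum_{j=n_0-k_0+1}^{n_0}\binom{n_0}{j}x^j(1-x)^{n_0-j},\qquad P(y_{i1}\le x)=\sum_{j=k_1+1}^{n_1}\binom{n_1}{j}x^j(1-x)^{n_1-j}.$$ Let $C$ be a random variable with $C\le A\sum_{i=1}^{n_{te}}(\beta\pi_0 y_{i0}+\pi_1 y_{i1})$ almost surely. Define $$C^*=n_{te}A\Big[\beta\pi_0\frac{n_0-k_0+1}{n_0+1}+\pi_1\frac{k_1+1}{n_1+1}\Big],$$ $$M=\max\Big\{\pi_1A\max\Big(\tfrac{k_1+1}{n_1+1},1-\tfrac{k_1+1}{n_1+1}\Big),\ \beta\pi_0A\max\Big(\tfrac{n_0-k_0+1}{n_0+1},1-\tfrac{n_0-k_0+1}{n_0+1}\Big)\Big\},$$ $$\sigma^2=n_{te}A^2\Big[\pi_1^2\frac{(k_1+1)(n_1-k_1)}{(n_1+1)^2(n_1+2)}+(\beta\pi_0)^2\frac{k_0(n_0-k_0+1)}{(n_0+1)^2(n_0+2)}\Big],$$ and assume $\sigma>0$. Then for every $t>0$, $$P(C\le C^*+t\sigma)\ge 1-\exp\Big\{-\frac{t^2}{2+\frac{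2M}{3\sigma}t}\Big\}.$$
   Context: Here $A=C(1,0)$ is the cost of a false negative, $\beta=C(0,1)/C(1,0)$, $\pi_0,\pi_1$ are the population class probabilities, and $n_{te}$ is the number of test instances. In the paper $y_{i0}$ and $y_{i1}$ model the upper bounds $1-F_0(T^0_{(k_0)})$ and $F_1(T^1_{(k_1+1)})$ on the false positive and false negative rates of test instance $i$ under the THORS threshold (with $F_j$ the continuous class-conditional score distribution functions and $T^j_{(i)}$ the class-$j$ validation order statistics), and $C=\sum_{i=1}^{n_{te}}A(\beta\pi_0\alpha_{i0}+\pi_1\alpha_{i1})$ is the expected misclassification cost on the test instances; the statement above makes explicit the independence across test instances used in the argument. *)

theory Defs
  imports "HOL-Probability.Probability"
begin

text \<open>CDF of the order-statistic bound: P(Beta <= x) written as a binomial tail,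
  sum over j = lo..n of (n choose j) x^j (1-x)^(n-j).\<close>
definition binom_tail :: "nat \<Rightarrow> nat \<Rightarrow> real \<Rightarrow> real" where
  "binom_tail n lo x = (\<Sum>j=lo..n. real (n choose j) * x ^ j * (1 - x) ^ (n - j))"

definition thors_Cstar :: "nat \<Rightarrow> real \<Rightarrow> real \<Rightarrow> real \<Rightarrow> real \<Rightarrow> nat \<Rightarrow> nat \<Rightarrow> nat \<Rightarrow> nat \<Rightarrow> real" where
  "thors_Cstar nte A \<beta> \<pi>0 \<pi>1 n0 n1 k0 k1 =
     real nte * A * (\<beta> * \<pi>0 * (real n0 - real k0 + 1) / (real n0 + 1)
                     + \<pi>1 * (real k1 + 1) / (real n1 + 1))"

definition thors_M :: "real \<Rightarrow> real \<Rightarrow> real \<Rightarrow> real \<Rightarrow> nat \<Rightarrow> nat \<Rightarrow> nat \<Rightarrow> nat \<Rightarrow> real" where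
  "thors_M A \<beta> \<pi>0 \<pi>1 n0 n1 k0 k1 =
     max (\<pi>1 * A * max ((real k1 + 1) / (real n1 + 1)) (1 - (real k1 + 1) / (real n1 + 1)))
         (\<beta> * \<pi>0 * A * max ((real n0 - real k0 + 1) / (real n0 + 1))
                              (1 - (real n0 - real k0 + 1) / (real n0 + 1)))"

definition thors_sigma2 :: "nat \<Rightarrow> real \<Rightarrow> real \<Rightarrow> real \<Rightarrow> real \<Rightarrow> nat \<Rightarrow> nat \<Rightarrow> nat \<Rightarrow> nat \<Rightarrow> real" where
  "thors_sigma2 nte A \<beta> \<pi>0 \<pi>1 n0 n1 k0 k1 =
     real nte * A\<^sup>2 * (\<pi>1\<^sup>2 * ((real k1 + 1) * (real n1 - real k1))
                          / ((real n1 + 1)\<^sup>2 * (real n1 + 2))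
                     + (\<beta> * \<pi>0)\<^sup>2 * (real k0 * (real n0 - real k0 + 1))
                          / ((real n0 + 1)\<^sup>2 * (real n0 + 2)))"

end

theory Submission
  imports Defs "HOL-Analysis.Gamma_Function" "HOL-Analysis.Weierstrass_Theorems"
begin

text \<open>
  The prescribed distribution functions make \<open>y\<^sub>i\<^sub>0\<close> a \<open>Beta(n\<^sub>0 - k\<^sub>0 + 1, k\<^sub>0)\<close> and \<open>y\<^sub>i\<^sub>1\<close> a
  \<open>Beta(k\<^sub>1 + 1, n\<^sub>1 - k\<^sub>1)\<close> variable, so \<open>C\<^sup>*\<close> and \<open>\<sigma>\<^sup>2\<close> are the mean and the variance of
  the bound \<open>A \<Sum>\<^sub>i (\<beta> \<pi>\<^sub>0 y\<^sub>i\<^sub>0 + \<pi>\<^sub>1 y\<^sub>i\<^sub>1)\<close> on the cost, and \<open>M\<close> bounds how far each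
  summand can exceed its mean. The claim is then Bernstein's inequality for the \<open>2 n\<^sub>t\<^sub>e\<close>
  independent centred summands at the deviation \<open>t \<sigma>\<close>, proved by the Chernoff method from
  \<open>e\<^sup>u \<le> 1 + u + u\<^sup>2 / (2 (1 - c/3))\<close> for \<open>u \<le> c < 3\<close>.
\<close>

section \<open>Bernstein's inequality\<close>

lemma two_mult_three_power_le_fact: "2 * 3 ^ n \<le> (fact (n + 2) :: real)"
proof (induction n)
  case 0
  then show ?case by simp
next
  case (Suc n)
  have "2 * 3 ^ Suc n = 3 * (2 * (3::real) ^ n)" by simp
  also have "\<dots> \<le> real (n + 3) * fact (n + 2)"
    using Suc by (intro mult_mono) auto
  also have "real (n + 3) * fact (n + 2) = (fact (Suc n + 2) :: real)"
    by (simp add: algebra_simps)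
  finally show ?case .
qed

lemma exp_le_quadratic_nonpos:
  fixes u :: real
  assumes "u \<le> 0"
  shows "exp u \<le> 1 + u + u\<^sup>2 / 2"
proof -
  define f where "f = (\<lambda>u::real. 1 + u + u\<^sup>2 / 2 - exp u)"
  have "(f has_real_derivative (1 + x - exp x)) (at x)" for x
    unfolding f_def by (auto intro!: derivative_eq_intros simp: power2_eq_square)
  then have "f 0 \<le> f u"
    using DERIV_nonpos_imp_nonincreasing[of u 0 f] assms
    by (metis exp_ge_add_one_self diff_le_0_iff_le)
  then show ?thesis by (simp add: f_def)
qed

text \<open>Compare the tail of the exponential series termwise with a geometric series of ratio \<open>u/3\<close>.\<close>
lemma exp_le_quadratic_geometric:
  fixes u :: real
  assumes "0 \<le> u" "u < 3"
  shows "exp u \<le> 1 + u + u\<^sup>2 / (2 * (1 - u / 3))"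
proof -
  have summable: "summable (\<lambda>n. u ^ n / fact n)"
    using summable_exp[of u] by (simp add: field_simps)
  have "exp u = (\<Sum>n. u ^ (n + 2) / fact (n + 2)) + (\<Sum>n<2. u ^ n / fact n)"
    using suminf_split_initial_segment[OF summable, of 2]
    by (simp add: exp_def inverse_eq_divide field_simps)
  also have "(\<Sum>n<2. u ^ n / fact n) = 1 + u" by (simp add: numeral_2_eq_2)
  finally have exp_eq: "exp u = (\<Sum>n. u ^ (n + 2) / fact (n + 2)) + 1 + u" by simp
  have geometric: "(\<lambda>n. u\<^sup>2 / 2 * (u / 3) ^ n) sums (u\<^sup>2 / 2 * (1 / (1 - u / 3)))"
    using assms by (intro sums_mult geometric_sums) simp
  have "u ^ (n + 2) / fact (n + 2) \<le> u\<^sup>2 / 2 * (u / 3) ^ n" for n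
  proof -
    have "u ^ (n + 2) / fact (n + 2) \<le> u ^ (n + 2) / (2 * 3 ^ n)"
      using assms two_mult_three_power_le_fact[of n] by (intro divide_left_mono) auto
    also have "\<dots> = u\<^sup>2 / 2 * (u / 3) ^ n"
      by (simp add: power_add power_divide field_simps power2_eq_square)
    finally show ?thesis .
  qed
  moreover have "summable (\<lambda>n. u ^ (n + 2) / fact (n + 2))"
    using summable by (subst summable_iff_shift)
  ultimately have "(\<Sum>n. u ^ (n + 2) / fact (n + 2)) \<le> u\<^sup>2 / 2 * (1 / (1 - u / 3))"
    using suminf_le[OF _ _ sums_summable[OF geometric]] sums_unique[OF geometric] by simp
  then show ?thesis using exp_eq assms by (simp add: field_simps)
qed

lemma exp_le_Bernstein_quadratic:
  fixes u c :: real
  assumes "u \<le> c" "0 \<le> c" "c < 3"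
  shows "exp u \<le> 1 + u + u\<^sup>2 / (2 * (1 - c / 3))"
proof (cases "u \<le> 0")
  case True
  have "u\<^sup>2 / 2 \<le> u\<^sup>2 / (2 * (1 - c / 3))"
    using assms by (intro divide_left_mono) (auto simp: field_simps)
  then show ?thesis using exp_le_quadratic_nonpos[OF True] by linarith
next
  case False
  have "u\<^sup>2 / (2 * (1 - u / 3)) \<le> u\<^sup>2 / (2 * (1 - c / 3))"
    using assms False by (intro divide_left_mono mult_pos_pos) auto
  then show ?thesis using exp_le_quadratic_geometric[of u] False assms by linarith
qed

lemma (in prob_space) Bernstein_mgf_bound:
  fixes X :: "'a \<Rightarrow> real"
  assumes [measurable]: "X \<in> borel_measurable M"
    and square_integrable: "integrable M (\<lambda>\<omega>. (X \<omega>)\<^sup>2)"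
    and centered: "expectation X = 0"
    and bounded: "\<And>\<omega>. \<omega> \<in> space M \<Longrightarrow> X \<omega> \<le> b"
    and "0 \<le> l" "0 \<le> b" "l * b < 3"
  shows "(\<integral>\<^sup>+\<omega>. ennreal (exp (l * X \<omega>)) \<partial>M)
           \<le> ennreal (exp (l\<^sup>2 * expectation (\<lambda>\<omega>. (X \<omega>)\<^sup>2) / (2 * (1 - l * b / 3))))"
proof -
  define K where "K = l\<^sup>2 / (2 * (1 - l * b / 3))"
  define g where "g = (\<lambda>\<omega>. 1 + l * X \<omega> + K * (X \<omega>)\<^sup>2)"
  have integrable: "integrable M X"
    using square_integrable by (rule square_integrable_imp_integrable[rotated]) simp
  have exp_le_g: "exp (l * X \<omega>) \<le> g \<omega>" if "\<omega> \<in> space M" for \<omega>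
  proof -
    have "l * X \<omega> \<le> l * b"
      using bounded[OF that] \<open>0 \<le> l\<close> by (rule mult_left_mono)
    moreover have "(l * X \<omega>)\<^sup>2 / (2 * (1 - l * b / 3)) = K * (X \<omega>)\<^sup>2"
      by (simp add: K_def power_mult_distrib)
    ultimately show ?thesis
      using exp_le_Bernstein_quadratic[of "l * X \<omega>" "l * b"] assms(5-) by (simp add: g_def)
  qed
  have "(\<integral>\<^sup>+\<omega>. ennreal (exp (l * X \<omega>)) \<partial>M) \<le> (\<integral>\<^sup>+\<omega>. ennreal (g \<omega>) \<partial>M)"
    using exp_le_g by (intro nn_integral_mono ennreal_leI) auto
  also have "\<dots> = ennreal (expectation g)"
    using integrable square_integrable order_trans[OF exp_ge_zero exp_le_g]
    by (intro nn_integral_eq_integral AE_I2) (auto simp: g_def)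
  also have "expectation g = 1 + K * expectation (\<lambda>\<omega>. (X \<omega>)\<^sup>2)"
    using integrable square_integrable centered by (simp add: g_def prob_space)
  also have "ennreal \<dots> \<le> ennreal (exp (K * expectation (\<lambda>\<omega>. (X \<omega>)\<^sup>2)))"
    by (intro ennreal_leI) (metis add.commute exp_ge_add_one_self)
  finally show ?thesis by (simp add: K_def)
qed

lemma Chernoff_exponent_Bernstein:
  fixes V b s :: real
  assumes "V > 0" "0 \<le> b" "0 \<le> s"
  defines "l \<equiv> s / (V + b * s / 3)"
  shows "- l * s + l\<^sup>2 * V / (2 * (1 - l * b / 3)) = - (s\<^sup>2 / (2 * (V + b * s / 3)))"
proof -
  define D where "D = V + b * s / 3"
  have "D > 0" using assms by (auto simp: D_def intro: add_pos_nonneg)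
  have "1 - l * b / 3 = V / D"
    using \<open>D > 0\<close> by (simp add: l_def D_def field_simps)
  moreover have "- (s / D) * s + (s / D)\<^sup>2 * V / (2 * (V / D)) = - (s\<^sup>2 / (2 * D))"
    using \<open>D > 0\<close> \<open>V > 0\<close> by (simp add: field_simps power2_eq_square)
  ultimately show ?thesis by (simp add: l_def D_def)
qed

theorem (in prob_space) Bernstein_inequality_ge:
  fixes X :: "'i \<Rightarrow> 'a \<Rightarrow> real"
  assumes "finite I"
    and indep: "indep_vars (\<lambda>_. borel) X I"
    and square_integrable: "\<And>i. i \<in> I \<Longrightarrow> integrable M (\<lambda>\<omega>. (X i \<omega>)\<^sup>2)"
    and centered: "\<And>i. i \<in> I \<Longrightarrow> expectation (X i) = 0"
    and bounded: "\<And>i \<omega>. i \<in> I \<Longrightarrow> \<omega> \<in> space M \<Longrightarrow> X i \<omega> \<le> b"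
    and "0 \<le> b" "s > 0"
    and V_pos: "(\<Sum>i\<in>I. expectation (\<lambda>\<omega>. (X i \<omega>)\<^sup>2)) > 0"
  shows "prob {\<omega> \<in> space M. (\<Sum>i\<in>I. X i \<omega>) \<ge> s}
           \<le> exp (- (s\<^sup>2 / (2 * ((\<Sum>i\<in>I. expectation (\<lambda>\<omega>. (X i \<omega>)\<^sup>2)) + b * s / 3))))"
proof -
  define V where "V = (\<Sum>i\<in>I. expectation (\<lambda>\<omega>. (X i \<omega>)\<^sup>2))"
  define l where "l = s / (V + b * s / 3)"
  have V: "V > 0" using V_pos by (simp add: V_def)
  have denom: "V + b * s / 3 > 0" using V assms by (auto intro: add_pos_nonneg)
  have "l > 0" using denom \<open>s > 0\<close> by (simp add: l_def)
  have "l * b < 3" using denom V \<open>s > 0\<close> by (simp add: l_def field_simps)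
  have [measurable]: "X i \<in> borel_measurable M" if "i \<in> I" for i
    using indep that unfolding indep_vars_def by blast
  have "emeasure M {\<omega> \<in> space M. (\<Sum>i\<in>I. X i \<omega>) \<ge> s}
          \<le> ennreal (exp (- l * s)) * (\<integral>\<^sup>+\<omega>. ennreal (exp (l * (\<Sum>i\<in>I. X i \<omega>))) * indicator (space M) \<omega> \<partial>M)"
    using \<open>l > 0\<close> by (intro Chernoff_ineq_nn_integral_ge) auto
  also have "(\<integral>\<^sup>+\<omega>. ennreal (exp (l * (\<Sum>i\<in>I. X i \<omega>))) * indicator (space M) \<omega> \<partial>M)
               = (\<integral>\<^sup>+\<omega>. (\<Prod>i\<in>I. ennreal (exp (l * X i \<omega>))) \<partial>M)"
    by (intro nn_integral_cong) (simp add: sum_distrib_left exp_sum \<open>finite I\<close> prod_ennreal)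
  also have "\<dots> = (\<Prod>i\<in>I. \<integral>\<^sup>+\<omega>. ennreal (exp (l * X i \<omega>)) \<partial>M)"
    by (intro indep_vars_nn_integral \<open>finite I\<close> indep_vars_compose2[OF indep]) auto
  also have "ennreal (exp (- l * s)) * \<dots>
      \<le> ennreal (exp (- l * s)) *
          (\<Prod>i\<in>I. ennreal (exp (l\<^sup>2 * expectation (\<lambda>\<omega>. (X i \<omega>)\<^sup>2) / (2 * (1 - l * b / 3)))))"
    using \<open>l > 0\<close> \<open>l * b < 3\<close> \<open>0 \<le> b\<close>
    by (intro mult_left_mono prod_mono_ennreal Bernstein_mgf_bound square_integrable centered bounded)
       auto
  also have "\<dots> = ennreal (exp (- l * s) *
                       (\<Prod>i\<in>I. exp (l\<^sup>2 * expectation (\<lambda>\<omega>. (X i \<omega>)\<^sup>2) / (2 * (1 - l * b / 3)))))"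
    by (simp add: prod_ennreal prod_nonneg ennreal_mult)
  also have "exp (- l * s) *
               (\<Prod>i\<in>I. exp (l\<^sup>2 * expectation (\<lambda>\<omega>. (X i \<omega>)\<^sup>2) / (2 * (1 - l * b / 3))))
             = exp (- l * s + l\<^sup>2 * V / (2 * (1 - l * b / 3)))"
    by (simp add: exp_diff exp_minus exp_sum \<open>finite I\<close> V_def sum_divide_distrib sum_distrib_left
        field_simps)
  also have "- l * s + l\<^sup>2 * V / (2 * (1 - l * b / 3)) = - (s\<^sup>2 / (2 * (V + b * s / 3)))"
    unfolding l_def using V \<open>0 \<le> b\<close> \<open>s > 0\<close> by (intro Chernoff_exponent_Bernstein) auto
  finally show ?thesis
    by (simp add: V_def emeasure_eq_measure)
qed

lemma Bernstein_exponent_rescale: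
  fixes \<sigma> b t :: real
  assumes "\<sigma> > 0" "0 \<le> b" "t > 0"
  shows "(t * \<sigma>)\<^sup>2 / (2 * (\<sigma>\<^sup>2 + b * (t * \<sigma>) / 3)) = t\<^sup>2 / (2 + 2 * b / (3 * \<sigma>) * t)"
proof -
  define Q where "Q = 3 * \<sigma> + b * t"
  have "Q > 0" using assms by (simp add: Q_def add_pos_nonneg)
  have denominator: "\<sigma>\<^sup>2 + b * (t * \<sigma>) / 3 = \<sigma> * Q / 3"
    by (simp add: Q_def algebra_simps power2_eq_square)
  have coefficient: "2 + 2 * b / (3 * \<sigma>) * t = 2 * Q / (3 * \<sigma>)"
    using assms by (simp add: Q_def field_simps)
  have "(t * \<sigma>)\<^sup>2 / (2 * (\<sigma> * Q / 3)) = t\<^sup>2 / (2 * Q / (3 * \<sigma>))"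
    using assms \<open>Q > 0\<close> by (simp add: field_simps power2_eq_square)
  then show ?thesis
    unfolding denominator coefficient .
qed

lemma (in prob_space) integrable_unit_interval:
  fixes Y :: "'a \<Rightarrow> real"
  assumes "Y \<in> borel_measurable M" "\<And>\<omega>. \<omega> \<in> space M \<Longrightarrow> 0 \<le> Y \<omega> \<and> Y \<omega> \<le> 1"
  shows "integrable M Y"
  using assms by (intro integrable_const_bound[where B = 1] AE_I2) auto

corollary (in prob_space) Bernstein_inequality_unit_interval:
  fixes I :: "'i set" and Y :: "'i \<Rightarrow> 'a \<Rightarrow> real" and c :: "'i \<Rightarrow> real"
  defines "V \<equiv> \<Sum>i\<in>I. (c i)\<^sup>2 * variance (Y i)"
  assumes "finite I"
    and indep: "indep_vars (\<lambda>_. borel) Y I"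
    and range: "\<And>i \<omega>. i \<in> I \<Longrightarrow> \<omega> \<in> space M \<Longrightarrow> 0 \<le> Y i \<omega> \<and> Y i \<omega> \<le> 1"
    and c_nonneg: "\<And>i. i \<in> I \<Longrightarrow> 0 \<le> c i"
    and bounded: "\<And>i. i \<in> I \<Longrightarrow> c i * (1 - expectation (Y i)) \<le> b"
    and "0 \<le> b" "t > 0" "V > 0"
  shows "prob {\<omega> \<in> space M. (\<Sum>i\<in>I. c i * (Y i \<omega> - expectation (Y i))) \<ge> t * sqrt V}
           \<le> exp (- (t\<^sup>2 / (2 + 2 * b / (3 * sqrt V) * t)))"
proof -
  define X where "X = (\<lambda>i \<omega>. c i * (Y i \<omega> - expectation (Y i)))"
  have [measurable]: "Y i \<in> borel_measurable M" if "i \<in> I" for i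
    using indep that unfolding indep_vars_def by blast
  have integrable: "integrable M (Y i)" "integrable M (\<lambda>\<omega>. (Y i \<omega>)\<^sup>2)" if "i \<in> I" for i
    using range[OF that] that
    by (auto intro!: integrable_unit_interval simp: power_le_one)
  have second_moments: "(\<Sum>i\<in>I. expectation (\<lambda>\<omega>. (X i \<omega>)\<^sup>2)) = (sqrt V)\<^sup>2"
    using \<open>V > 0\<close> by (simp add: V_def X_def power_mult_distrib)
  have "prob {\<omega> \<in> space M. (\<Sum>i\<in>I. X i \<omega>) \<ge> t * sqrt V}
          \<le> exp (- ((t * sqrt V)\<^sup>2 / (2 * ((\<Sum>i\<in>I. expectation (\<lambda>\<omega>. (X i \<omega>)\<^sup>2)) + b * (t * sqrt V) / 3))))"
  proof (rule Bernstein_inequality_ge)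
    show "indep_vars (\<lambda>_. borel) X I"
      unfolding X_def by (rule indep_vars_compose2[OF indep]) auto
    show "integrable M (\<lambda>\<omega>. (X i \<omega>)\<^sup>2)" if "i \<in> I" for i
      using integrable[OF that] by (simp add: X_def power_mult_distrib power2_diff)
    show "expectation (X i) = 0" if "i \<in> I" for i
      using integrable[OF that] by (simp add: X_def prob_space)
    show "X i \<omega> \<le> b" if "i \<in> I" "\<omega> \<in> space M" for i \<omega>
    proof -
      have "X i \<omega> \<le> c i * (1 - expectation (Y i))"
        unfolding X_def using range[OF that] c_nonneg[OF that(1)] by (intro mult_left_mono) auto
      then show ?thesis using bounded[OF that(1)] by linarith
    qed
  qed (use assms second_moments in auto)
  moreover have "sqrt V > 0" using \<open>V > 0\<close> by simp
  ultimately show ?thesis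
    unfolding second_moments Bernstein_exponent_rescale[OF \<open>sqrt V > 0\<close> \<open>0 \<le> b\<close> \<open>t > 0\<close>]
    by (simp add: X_def)
qed

section \<open>Moments of the order-statistic distribution\<close>

lemma has_integral_power_mult_power:
  "((\<lambda>x::real. x ^ a * (1 - x) ^ b) has_integral fact a * fact b / fact (a + b + 1)) {0<..<1}"
proof -
  have "((\<lambda>x. x powr (real (a + 1) - 1) * (1 - x) powr (real (b + 1) - 1))
          has_integral Beta (real (a + 1)) (real (b + 1))) {0<..<1}"
    using has_integral_Beta_real[of "real (a + 1)" "real (b + 1)"]
    by (simp add: has_integral_Icc_iff_Ioo)
  moreover have "Beta (real (a + 1)) (real (b + 1)) = fact a * fact b / fact (a + b + 1)"
    unfolding Beta_def
    using Gamma_fact[of a, where 'a = real] Gamma_fact[of b, where 'a = real]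
      Gamma_fact[of "a + b + 1", where 'a = real]
    by (simp add: add_ac)
  ultimately show ?thesis
    by (subst has_integral_cong[where g = "\<lambda>x. x powr (real (a + 1) - 1) * (1 - x) powr (real (b + 1) - 1)"])
       (auto simp: powr_realpow)
qed

lemma Bernstein_has_integral:
  assumes "j \<le> n"
  shows "(Bernstein n j has_integral 1 / (real n + 1)) {0<..<1}"
proof -
  have "Bernstein n j = (\<lambda>x. real (n choose j) * (x ^ j * (1 - x) ^ (n - j)))"
    by (simp add: fun_eq_iff Bernstein_def)
  moreover have "j + (n - j) + 1 = Suc n" using assms by simp
  ultimately have "(Bernstein n j has_integral real (n choose j) * (fact j * fact (n - j) / fact (Suc n)))
                     {0<..<1}"
    using has_integral_mult_right[OF has_integral_power_mult_power[of j "n - j"]] by metis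
  also have "real (n choose j) * (fact j * fact (n - j) / fact (Suc n)) = fact n / fact (Suc n)"
    using binomial_fact_lemma[OF assms] by (metis of_nat_fact of_nat_mult times_divide_eq_right mult.commute)
  finally show ?thesis by (simp add: add.commute)
qed

lemma mult_Bernstein: "x * Bernstein n j x = (real j + 1) / (real n + 1) * Bernstein (Suc n) (Suc j) x"
proof -
  have "(real j + 1) * real (Suc n choose Suc j) = (real n + 1) * real (n choose j)"
    using Suc_times_binomial[of j n] by (metis of_nat_Suc of_nat_mult add.commute)
  then have "(real j + 1) / (real n + 1) * real (Suc n choose Suc j) = real (n choose j)"
    by (simp add: field_simps del: binomial_Suc_Suc)
  then have "(real j + 1) / (real n + 1) * Bernstein (Suc n) (Suc j) x
               = real (n choose j) * x ^ Suc j * (1 - x) ^ (n - j)"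
    unfolding Bernstein_def diff_Suc_Suc by (metis mult.assoc)
  then show ?thesis
    by (simp add: Bernstein_def)
qed

lemma mult_Bernstein_has_integral:
  assumes "j \<le> n"
  shows "((\<lambda>x. x * Bernstein n j x) has_integral (real j + 1) / ((real n + 1) * (real n + 2))) {0<..<1}"
  using has_integral_mult_right[OF Bernstein_has_integral[of "Suc j" "Suc n"], of "(real j + 1) / (real n + 1)"]
    assms
  by (simp add: mult_Bernstein add_ac)

lemma one_minus_binom_tail:
  assumes "lo \<le> n + 1"
  shows "1 - binom_tail n lo x = (\<Sum>j<lo. Bernstein n j x)"
proof -
  have "{..n} = {..<lo} \<union> {lo..n}" using assms by auto
  then have "(\<Sum>j<lo. Bernstein n j x) + (\<Sum>j=lo..n. Bernstein n j x) = 1"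
    using sum_Bernstein[of n x] by (metis finite_lessThan finite_atLeastAtMost ivl_disj_int_one(4)
        sum.union_disjoint)
  then show ?thesis by (simp add: binom_tail_def Bernstein_def)
qed

lemma nn_integral_power_Ioo:
  assumes "0 \<le> y"
  shows "(\<integral>\<^sup>+x. ennreal (real (Suc k) * x ^ k) * indicator {0<..<y} x \<partial>lborel) = ennreal (y ^ Suc k)"
proof (rule nn_integral_has_integral_lebesgue')
  have "real k * x ^ (k - 1) * x = real k * x ^ k" for x :: real
    by (cases k) auto
  then have "((\<lambda>x. real (Suc k) * x ^ k) has_integral y ^ Suc k - 0 ^ Suc k) {0..y}"
    using assms
    by (intro fundamental_theorem_of_calculus)
       (auto intro!: derivative_eq_intros simp: algebra_simps
             simp flip: has_real_derivative_iff_has_vector_derivative)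
  then show "((\<lambda>x. real (Suc k) * x ^ k) has_integral y ^ Suc k) {0<..<y}"
    by (simp add: has_integral_Icc_iff_Ioo)
qed auto

lemma (in prob_space) nn_integral_survival_fibre:
  fixes Y :: "'a \<Rightarrow> real"
  assumes [measurable]: "Y \<in> borel_measurable M"
    and range: "\<And>\<omega>. \<omega> \<in> space M \<Longrightarrow> 0 \<le> Y \<omega> \<and> Y \<omega> \<le> 1"
    and "0 < x \<Longrightarrow> 0 \<le> w"
  shows "(\<integral>\<^sup>+\<omega>. ennreal (if 0 < x \<and> x < Y \<omega> then w else 0) \<partial>M)
           = ennreal (w * prob {\<omega> \<in> space M. x < Y \<omega>}) * indicator {0<..<1} x"
proof (cases "0 < x \<and> x < 1")
  case True
  have "(\<integral>\<^sup>+\<omega>. ennreal (if 0 < x \<and> x < Y \<omega> then w else 0) \<partial>M)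
          = (\<integral>\<^sup>+\<omega>. ennreal w * indicator {\<omega> \<in> space M. x < Y \<omega>} \<omega> \<partial>M)"
    using True by (intro nn_integral_cong) (auto simp: indicator_def)
  also have "\<dots> = ennreal w * emeasure M {\<omega> \<in> space M. x < Y \<omega>}"
    by (rule nn_integral_cmult_indicator) measurable
  finally show ?thesis
    using True assms(3) by (simp add: emeasure_eq_measure ennreal_mult')
next
  case False
  have "(\<integral>\<^sup>+\<omega>. ennreal (if 0 < x \<and> x < Y \<omega> then w else 0) \<partial>M) = (\<integral>\<^sup>+\<omega>. 0 \<partial>M)"
    using False range by (intro nn_integral_cong) force
  then show ?thesis
    using False by simp
qed

text \<open>Tonelli applied to \<open>Y\<^sup>k\<^sup>+\<^sup>1 = \<integral>\<^sub>0\<^sup>Y (k+1) x\<^sup>k dx\<close>.\<close>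
lemma (in prob_space) moment_eq_integral_survival:
  fixes Y :: "'a \<Rightarrow> real"
  assumes [measurable]: "Y \<in> borel_measurable M"
    and range: "\<And>\<omega>. \<omega> \<in> space M \<Longrightarrow> 0 \<le> Y \<omega> \<and> Y \<omega> \<le> 1"
    and survival: "((\<lambda>x. real (Suc k) * x ^ k * prob {\<omega> \<in> space M. x < Y \<omega>}) has_integral I) {0<..<1}"
  shows "expectation (\<lambda>\<omega>. Y \<omega> ^ Suc k) = I"
proof -
  interpret pair_sigma_finite lborel M by unfold_locales
  define f where "f x \<omega> = ennreal (if 0 < x \<and> x < Y \<omega> then real (Suc k) * x ^ k else 0)" for x \<omega>
  have [measurable]: "case_prod f \<in> borel_measurable (lborel \<Otimes>\<^sub>M M)"
    unfolding f_def by measurable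
  have nonneg: "0 \<le> real (Suc k) * x ^ k * prob {\<omega> \<in> space M. x < Y \<omega>}" if "x \<in> {0<..<1}" for x
    using that by simp
  have inner: "(\<integral>\<^sup>+x. f x \<omega> \<partial>lborel) = ennreal (Y \<omega> ^ Suc k)" if "\<omega> \<in> space M" for \<omega>
  proof -
    have "(\<integral>\<^sup>+x. f x \<omega> \<partial>lborel)
            = (\<integral>\<^sup>+x. ennreal (real (Suc k) * x ^ k) * indicator {0<..<Y \<omega>} x \<partial>lborel)"
      by (intro nn_integral_cong) (simp add: f_def indicator_def)
    also have "\<dots> = ennreal (Y \<omega> ^ Suc k)"
      using range[OF that] by (intro nn_integral_power_Ioo) simp
    finally show ?thesis .
  qed
  have "(\<integral>\<^sup>+\<omega>. ennreal (Y \<omega> ^ Suc k) \<partial>M) = (\<integral>\<^sup>+\<omega>. (\<integral>\<^sup>+x. f x \<omega> \<partial>lborel) \<partial>M)"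
    by (intro nn_integral_cong) (simp add: inner)
  also have "\<dots> = (\<integral>\<^sup>+x. (\<integral>\<^sup>+\<omega>. f x \<omega> \<partial>M) \<partial>lborel)"
    by (rule Fubini') measurable
  also have "\<dots> = (\<integral>\<^sup>+x. ennreal (real (Suc k) * x ^ k * prob {\<omega> \<in> space M. x < Y \<omega>})
                          * indicator {0<..<1} x \<partial>lborel)"
    unfolding f_def using nn_integral_survival_fibre[OF assms(1) range] by simp
  also have "\<dots> = ennreal I"
    by (rule nn_integral_has_integral_lebesgue'[OF nonneg survival])
  finally have "(\<integral>\<^sup>+\<omega>. ennreal (Y \<omega> ^ Suc k) \<partial>M) = ennreal I" .
  moreover have "(\<integral>\<^sup>+\<omega>. ennreal (Y \<omega> ^ Suc k) \<partial>M) = ennreal (expectation (\<lambda>\<omega>. Y \<omega> ^ Suc k))"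
  proof -
    have "0 \<le> Y \<omega> ^ Suc k \<and> Y \<omega> ^ Suc k \<le> 1" if "\<omega> \<in> space M" for \<omega>
      using range[OF that] by (simp add: power_le_one del: power_Suc)
    then show ?thesis
      by (intro nn_integral_eq_integral integrable_const_bound[where B = 1] AE_I2) auto
  qed
  moreover have "0 \<le> I"
    using nonneg by (rule has_integral_nonneg[OF survival])
  ultimately show ?thesis
    using range by (simp add: integral_nonneg_AE)
qed

text \<open>\<open>binom_tail n lo\<close> is the distribution function of the \<open>lo\<close>-th order statistic of \<open>n\<close>
  uniform samples; its survival function is a sum of Bernstein polynomials, each of which
  integrates to \<open>1 / (n + 1)\<close>.\<close>
lemma (in prob_space) binom_tail_distributed_moments:
  fixes Y :: "'a \<Rightarrow> real"
  assumes [measurable]: "Y \<in> borel_measurable M"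
    and range: "\<And>\<omega>. \<omega> \<in> space M \<Longrightarrow> 0 \<le> Y \<omega> \<and> Y \<omega> \<le> 1"
    and cdf: "\<And>x. 0 < x \<Longrightarrow> x < 1 \<Longrightarrow> prob {\<omega> \<in> space M. Y \<omega> \<le> x} = binom_tail n lo x"
    and "lo \<le> n + 1"
  shows "expectation Y = real lo / (real n + 1)"
    and "variance Y = real lo * (real n + 1 - real lo) / ((real n + 1)\<^sup>2 * (real n + 2))"
proof -
  have survival: "prob {\<omega> \<in> space M. x < Y \<omega>} = (\<Sum>j<lo. Bernstein n j x)" if "x \<in> {0<..<1}" for x
  proof -
    have "{\<omega> \<in> space M. x < Y \<omega>} = space M - {\<omega> \<in> space M. Y \<omega> \<le> x}" by auto
    then have "prob {\<omega> \<in> space M. x < Y \<omega>} = 1 - binom_tail n lo x"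
      using that by (simp add: prob_compl cdf)
    then show ?thesis
      using one_minus_binom_tail[OF \<open>lo \<le> n + 1\<close>] by simp
  qed
  have j_le: "j \<le> n" if "j \<in> {..<lo}" for j
    using that \<open>lo \<le> n + 1\<close> by auto
  have "((\<lambda>x. \<Sum>j<lo. Bernstein n j x) has_integral (\<Sum>j<lo. 1 / (real n + 1))) {0<..<1}"
    by (intro has_integral_sum Bernstein_has_integral j_le) auto
  then have "((\<lambda>x. real (Suc 0) * x ^ 0 * prob {\<omega> \<in> space M. x < Y \<omega>}) has_integral
               real lo / (real n + 1)) {0<..<1}"
    by (subst has_integral_cong) (auto simp: survival)
  from moment_eq_integral_survival[OF _ range this]
  show mean: "expectation Y = real lo / (real n + 1)" by simp
  have gauss: "(\<Sum>j<m. 2 * (real j + 1)) = real m * (real m + 1)" for m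
    by (induction m) (auto simp: algebra_simps)
  have "((\<lambda>x. \<Sum>j<lo. 2 * (x * Bernstein n j x)) has_integral
           (\<Sum>j<lo. 2 * ((real j + 1) / ((real n + 1) * (real n + 2))))) {0<..<1}"
    by (intro has_integral_sum has_integral_mult_right mult_Bernstein_has_integral j_le) auto
  then have "((\<lambda>x. real (Suc 1) * x ^ 1 * prob {\<omega> \<in> space M. x < Y \<omega>}) has_integral
               real lo * (real lo + 1) / ((real n + 1) * (real n + 2))) {0<..<1}"
    using gauss[of lo]
    by (subst has_integral_cong)
       (auto simp: survival sum_distrib_left mult.assoc
        simp del: times_divide_eq_left simp flip: sum_divide_distrib)
  from moment_eq_integral_survival[OF _ range this]
  have second: "expectation (\<lambda>\<omega>. (Y \<omega>)\<^sup>2) = real lo * (real lo + 1) / ((real n + 1) * (real n + 2))"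
    by (simp add: power2_eq_square)
  have "variance Y = expectation (\<lambda>\<omega>. (Y \<omega>)\<^sup>2) - (expectation Y)\<^sup>2"
    using range by (intro variance_eq integrable_unit_interval) (auto simp: power_le_one)
  also have "\<dots> = real lo * (real n + 1 - real lo) / ((real n + 1)\<^sup>2 * (real n + 2))"
  proof -
    have "real n + 1 > 0" "real n + 2 > 0" by auto
    then show ?thesis
      unfolding mean second by (simp add: divide_simps) (simp add: algebra_simps power2_eq_square)
  qed
  finally show "variance Y = real lo * (real n + 1 - real lo) / ((real n + 1)\<^sup>2 * (real n + 2))" .
qed

section \<open>The misclassification cost bound\<close>

lemma (in prob_space) prob_le_ge_one_minus_tail:
  fixes C S :: "'a \<Rightarrow> real"
  assumes [measurable]: "C \<in> borel_measurable M" "S \<in> borel_measurable M"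
    and AE_le: "AE \<omega> in M. C \<omega> \<le> S \<omega> + a"
    and tail: "prob {\<omega> \<in> space M. S \<omega> \<ge> s} \<le> e"
  shows "prob {\<omega> \<in> space M. C \<omega> \<le> a + s} \<ge> 1 - e"
proof -
  have "{\<omega> \<in> space M. S \<omega> < s} = space M - {\<omega> \<in> space M. S \<omega> \<ge> s}" by auto
  then have "1 - prob {\<omega> \<in> space M. S \<omega> \<ge> s} = prob {\<omega> \<in> space M. S \<omega> < s}"
    by (simp add: prob_compl)
  also have "\<dots> \<le> prob {\<omega> \<in> space M. C \<omega> \<le> a + s}"
    by (rule finite_measure_mono_AE) (use AE_le in \<open>auto elim: AE_mp\<close>)
  finally show ?thesis using tail by linarith
qed

lemma sum_Times_zero_one: "(\<Sum>p\<in>A \<times> {0::nat, 1}. f p) = (\<Sum>i\<in>A. f (i, 0) + f (i, 1))"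
proof -
  have "(\<Sum>p\<in>A \<times> {0::nat, 1}. f p) = (\<Sum>(i, j)\<in>A \<times> {0::nat, 1}. f (i, j))" by simp
  also have "\<dots> = (\<Sum>i\<in>A. \<Sum>j\<in>{0::nat, 1}. f (i, j))" by (rule sum.cartesian_product[symmetric])
  finally show ?thesis by simp
qed

lemma thors_M_bounds:
  fixes A \<beta> \<pi>0 \<pi>1 :: real and n0 n1 k0 k1 :: nat
  assumes "0 \<le> A" "0 \<le> \<beta>" "0 \<le> \<pi>0" "0 \<le> \<pi>1"
  shows "0 \<le> thors_M A \<beta> \<pi>0 \<pi>1 n0 n1 k0 k1"
    and "\<beta> * \<pi>0 * A * (1 - (real n0 - real k0 + 1) / (real n0 + 1)) \<le> thors_M A \<beta> \<pi>0 \<pi>1 n0 n1 k0 k1"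
    and "\<pi>1 * A * (1 - (real k1 + 1) / (real n1 + 1)) \<le> thors_M A \<beta> \<pi>0 \<pi>1 n0 n1 k0 k1"
proof -
  have "\<beta> * \<pi>0 * A * (1 - x) \<le> \<beta> * \<pi>0 * A * max x (1 - x)"
    and "\<pi>1 * A * (1 - x) \<le> \<pi>1 * A * max x (1 - x)" for x :: real
    using assms by (intro mult_left_mono; simp)+
  then show "\<beta> * \<pi>0 * A * (1 - (real n0 - real k0 + 1) / (real n0 + 1)) \<le> thors_M A \<beta> \<pi>0 \<pi>1 n0 n1 k0 k1"
    and "\<pi>1 * A * (1 - (real k1 + 1) / (real n1 + 1)) \<le> thors_M A \<beta> \<pi>0 \<pi>1 n0 n1 k0 k1"
    unfolding thors_M_def by (meson max.coboundedI1 max.coboundedI2 order_trans)+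
  show "0 \<le> thors_M A \<beta> \<pi>0 \<pi>1 n0 n1 k0 k1"
    using assms by (auto simp: thors_M_def intro: max.coboundedI1)
qed

theorem theorem3:
  fixes M :: "'a measure"
    and y :: "nat \<Rightarrow> nat \<Rightarrow> 'a \<Rightarrow> real"
    and C :: "'a \<Rightarrow> real"
    and A \<beta> \<pi>0 \<pi>1 t :: real
    and nte n0 n1 k0 k1 :: nat
  assumes "prob_space M"
    and "A > 0" and "0 < \<beta>" and "\<beta> < 1"
    and "0 \<le> \<pi>0" and "\<pi>0 \<le> 1" and "0 \<le> \<pi>1" and "\<pi>1 \<le> 1"
    and "nte \<ge> 1" and "n0 \<ge> 1" and "n1 \<ge> 1" and "k0 \<le> n0" and "k1 \<le> n1"
    and indep: "prob_space.indep_vars M (\<lambda>_. borel) (\<lambda>(i, j). y i j) ({1..nte} \<times> {0, 1})"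
    and range: "\<And>i j \<omega>. i \<in> {1..nte} \<Longrightarrow> j \<in> {0, 1} \<Longrightarrow> \<omega> \<in> space M \<Longrightarrow>
                  0 \<le> y i j \<omega> \<and> y i j \<omega> \<le> 1"
    and cdf0: "\<And>i x. i \<in> {1..nte} \<Longrightarrow> 0 < x \<Longrightarrow> x < 1 \<Longrightarrow>
                  measure M {\<omega> \<in> space M. y i 0 \<omega> \<le> x} = binom_tail n0 (n0 - k0 + 1) x"
    and cdf1: "\<And>i x. i \<in> {1..nte} \<Longrightarrow> 0 < x \<Longrightarrow> x < 1 \<Longrightarrow>
                  measure M {\<omega> \<in> space M. y i 1 \<omega> \<le> x} = binom_tail n1 (k1 + 1) x"
    and C_meas: "C \<in> borel_measurable M"
    and C_bound: "AE \<omega> in M. C \<omega> \<le> A * (\<Sum>i=1..nte. \<beta> * \<pi>0 * y i 0 \<omega> + \<pi>1 * y i 1 \<omega>)"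
    and sigma_pos: "thors_sigma2 nte A \<beta> \<pi>0 \<pi>1 n0 n1 k0 k1 > 0"
    and "t > 0"
  shows "measure M {\<omega> \<in> space M.
            C \<omega> \<le> thors_Cstar nte A \<beta> \<pi>0 \<pi>1 n0 n1 k0 k1
                   + t * sqrt (thors_sigma2 nte A \<beta> \<pi>0 \<pi>1 n0 n1 k0 k1)}
         \<ge> 1 - exp (- (t\<^sup>2 / (2 + 2 * thors_M A \<beta> \<pi>0 \<pi>1 n0 n1 k0 k1
                         / (3 * sqrt (thors_sigma2 nte A \<beta> \<pi>0 \<pi>1 n0 n1 k0 k1)) * t)))"
proof -
  interpret prob_space M by fact
  define I where "I = {1..nte} \<times> {0::nat, 1}"
  define Y where "Y = (\<lambda>(i, j). y i j)"
  define c where "c = (\<lambda>(i::nat, j::nat). if j = 0 then \<beta> * \<pi>0 * A else \<pi>1 * A)"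
  define S where "S = (\<lambda>\<omega>. \<Sum>p\<in>I. c p * (Y p \<omega> - expectation (Y p)))"
  have [measurable]: "y i j \<in> borel_measurable M" if "i \<in> {1..nte}" "j \<in> {0, 1}" for i j
    using indep that unfolding indep_vars_def by auto
  have mean0: "expectation (y i 0) = (real n0 - real k0 + 1) / (real n0 + 1)"
    and variance0: "variance (y i 0) = real k0 * (real n0 - real k0 + 1) / ((real n0 + 1)\<^sup>2 * (real n0 + 2))"
    if "i \<in> {1..nte}" for i
    using binom_tail_distributed_moments[of "y i 0" n0 "n0 - k0 + 1"] that range cdf0 \<open>k0 \<le> n0\<close>
    by (simp_all add: mult.commute)
  have mean1: "expectation (y i 1) = (real k1 + 1) / (real n1 + 1)"
    and variance1: "variance (y i 1) = (real k1 + 1) * (real n1 - real k1) / ((real n1 + 1)\<^sup>2 * (real n1 + 2))"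
    if "i \<in> {1..nte}" for i
    using binom_tail_distributed_moments[of "y i 1" n1 "k1 + 1"] that range cdf1 \<open>k1 \<le> n1\<close>
    by (simp_all add: add.commute)
  have cost_eq: "A * (\<Sum>i=1..nte. \<beta> * \<pi>0 * y i 0 \<omega> + \<pi>1 * y i 1 \<omega>)
                   = S \<omega> + thors_Cstar nte A \<beta> \<pi>0 \<pi>1 n0 n1 k0 k1" for \<omega>
  proof -
    have "S \<omega> = (\<Sum>i=1..nte. A * (\<beta> * \<pi>0 * y i 0 \<omega> + \<pi>1 * y i 1 \<omega>)
                     - A * (\<beta> * \<pi>0 * ((real n0 - real k0 + 1) / (real n0 + 1))
                            + \<pi>1 * ((real k1 + 1) / (real n1 + 1))))"
      unfolding S_def I_def sum_Times_zero_one
      using mean0 mean1 by (intro sum.cong refl) (simp add: Y_def c_def algebra_simps)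
    then show ?thesis
      by (simp add: sum_subtractf sum_distrib_left thors_Cstar_def)
  qed
  have variance_sum: "(\<Sum>p\<in>I. (c p)\<^sup>2 * variance (Y p)) = thors_sigma2 nte A \<beta> \<pi>0 \<pi>1 n0 n1 k0 k1"
  proof -
    have "(\<Sum>p\<in>I. (c p)\<^sup>2 * variance (Y p))
            = (\<Sum>i=1..nte. (\<beta> * \<pi>0 * A)\<^sup>2 * (real k0 * (real n0 - real k0 + 1) / ((real n0 + 1)\<^sup>2 * (real n0 + 2)))
                + (\<pi>1 * A)\<^sup>2 * ((real k1 + 1) * (real n1 - real k1) / ((real n1 + 1)\<^sup>2 * (real n1 + 2))))"
      unfolding I_def sum_Times_zero_one
      by (intro sum.cong refl)
         (simp only: Y_def c_def prod.case simp_thms if_True if_False one_neq_zero variance0 variance1)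
    then show ?thesis
      by (simp add: thors_sigma2_def power_mult_distrib algebra_simps)
  qed
  have "prob {\<omega> \<in> space M. S \<omega> \<ge> t * sqrt (thors_sigma2 nte A \<beta> \<pi>0 \<pi>1 n0 n1 k0 k1)}
          \<le> exp (- (t\<^sup>2 / (2 + 2 * thors_M A \<beta> \<pi>0 \<pi>1 n0 n1 k0 k1
                         / (3 * sqrt (thors_sigma2 nte A \<beta> \<pi>0 \<pi>1 n0 n1 k0 k1)) * t)))"
    unfolding S_def variance_sum[symmetric]
  proof (rule Bernstein_inequality_unit_interval)
    show "indep_vars (\<lambda>_. borel) Y I" using indep by (simp add: I_def Y_def)
  qed (use assms(2-8) range thors_M_bounds mean0 mean1 sigma_pos variance_sum \<open>t > 0\<close>
        in \<open>auto simp: I_def Y_def c_def\<close>)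
  moreover have "S \<in> borel_measurable M"
    using indep unfolding S_def indep_vars_def I_def Y_def by (auto intro!: borel_measurable_sum)
  ultimately show ?thesis
    using C_meas C_bound cost_eq by (intro prob_le_ge_one_minus_tail) auto
qed

end
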